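(* Let $\mathscr Q_n$ be a non-singular quadric in $\mathrm{PG}(n,2)$ of projective index $g\ge1$, let $0\le s<g$, and let $\alpha_s$ be an $s$-dimensional subspace contained in $\mathscr Q_n$. Then every generator of $\mathscr Q_n$ contains at least one point of type (ii).
   Context: A non-singular quadric $\mathscr Q_n$ in $\mathrm{PG}(n,2)$ is the point set of a non-degenerate quadric; its projective index $g$ is the largest dimension of a projective subspace contained in $\mathscr Q_n$, and the $g$-dimensional subspaces contained in $\mathscr Q_n$ are its generators. A point $X$ of $\mathscr Q_n$ has type (ii) (with respect to $\alpha_s$) if $X\notin\alpha_s$ and the $(s+1)$-space $\langle\alpha_s,X\rangle$ is contained in $\mathscr Q_n$. *)

theory Defs
  imports "HOL-Analysis.Finite_Cartesian_Product" "HOL-Library.Z2"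
begin

text \<open>PG(n,2) is modelled on the vector space bit^'n over GF(2), with CARD('n) = n+1.
  Over GF(2) every projective point has a unique nonzero representative, so points of
  PG(n,2) are the nonzero vectors.\<close>

type_synonym 'n gf2vec = "bit ^ ('n::finite)"

text \<open>Linear subspace over GF(2): contains 0 and closed under addition
  (scalars are only 0 and 1).\<close>
definition gf2_subspace :: "('n::finite) gf2vec set \<Rightarrow> bool" where
  "gf2_subspace W \<longleftrightarrow> 0 \<in> W \<and> (\<forall>x\<in>W. \<forall>y\<in>W. x + y \<in> W)"

text \<open>A projective s-dimensional subspace is (the nonzero vectors of) a linear subspace
  of vector dimension s+1, i.e. with 2^(s+1) elements.\<close>
definition proj_subspace :: "('n::finite) gf2vec set \<Rightarrow> nat \<Rightarrow> bool" where
  "proj_subspace W s \<longleftrightarrow> gf2_subspace W \<and> card W = 2 ^ (s + 1)"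

definition polar :: "(('n::finite) gf2vec \<Rightarrow> bit) \<Rightarrow> 'n gf2vec \<Rightarrow> 'n gf2vec \<Rightarrow> bit" where
  "polar Q x y = Q (x + y) - Q x - Q y"

definition quadratic_form :: "(('n::finite) gf2vec \<Rightarrow> bit) \<Rightarrow> bool" where
  "quadratic_form Q \<longleftrightarrow>
     (\<forall>c x. Q (c *s x) = c ^ 2 * Q x) \<and>
     (\<forall>x y z. polar Q (x + y) z = polar Q x z + polar Q y z) \<and>
     (\<forall>c x y. polar Q (c *s x) y = c * polar Q x y)"

definition quadric :: "(('n::finite) gf2vec \<Rightarrow> bit) \<Rightarrow> 'n gf2vec set" where
  "quadric Q = {x. x \<noteq> 0 \<and> Q x = 0}"

definition nonsingular_quadric :: "(('n::finite) gf2vec \<Rightarrow> bit) \<Rightarrow> bool" where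
  "nonsingular_quadric Q \<longleftrightarrow> quadratic_form Q \<and>
     \<not> (\<exists>v\<in>quadric Q. \<forall>w. polar Q v w = 0)"

definition contained_in_quadric :: "(('n::finite) gf2vec \<Rightarrow> bit) \<Rightarrow> 'n gf2vec set \<Rightarrow> bool" where
  "contained_in_quadric Q W \<longleftrightarrow> W - {0} \<subseteq> quadric Q"

definition proj_index :: "(('n::finite) gf2vec \<Rightarrow> bit) \<Rightarrow> nat" where
  "proj_index Q = (GREATEST s. \<exists>W. proj_subspace W s \<and> contained_in_quadric Q W)"

definition generator :: "(('n::finite) gf2vec \<Rightarrow> bit) \<Rightarrow> 'n gf2vec set \<Rightarrow> bool" where
  "generator Q W \<longleftrightarrow> proj_subspace W (proj_index Q) \<and> contained_in_quadric Q W"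

definition join :: "('n::finite) gf2vec set \<Rightarrow> 'n gf2vec \<Rightarrow> 'n gf2vec set" where
  "join W X = W \<union> (\<lambda>w. X + w) ` W"

definition type_ii :: "(('n::finite) gf2vec \<Rightarrow> bit) \<Rightarrow> 'n gf2vec set \<Rightarrow> 'n gf2vec \<Rightarrow> bool" where
  "type_ii Q A X \<longleftrightarrow> X \<in> quadric Q \<and> X \<notin> A \<and> contained_in_quadric Q (join A X)"

end

theory Submission
  imports Defs
begin

text \<open>Suppose a generator G contains no point of type (ii). Then a point of G orthogonal to all
  of A lies in A, and by maximality of G a point of A orthogonal to all of G lies in G. Hence
  the polar form, restricted to G \<times> A, has left and right radical both equal to G \<inter> A. For a
  pairing over GF(2) the two radicals have the same index, which is the rank of the pairing;
  so |G| = |A|, contradicting s < g.\<close>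

instance bit :: finite
proof
  have "(UNIV :: bit set) = {0, 1}"
    by (auto intro: bit.exhaust)
  then show "finite (UNIV :: bit set)"
    by (metis finite.emptyI finite.insertI)
qed

lemma bit_add_self [simp]: "(b::bit) + b = 0"
  by (cases b) simp_all

lemma gf2vec_add_self [simp]: "(x::'n::finite gf2vec) + x = 0"
  by (simp add: vec_eq_iff)

lemma gf2vec_add_cancel [simp]: "(x::'n::finite gf2vec) + y + y = x"
  by (simp add: add.assoc)

lemma gf2vec_add_cancel_left [simp]: "(x::'n::finite gf2vec) + (x + y) = y"
  by (simp flip: add.assoc)

lemma gf2_subspaceD:
  assumes "gf2_subspace W"
  shows "0 \<in> W" and "x \<in> W \<Longrightarrow> y \<in> W \<Longrightarrow> x + y \<in> W"
  using assms unfolding gf2_subspace_def by auto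

lemma quadratic_add: "Q (x + y) = Q x + Q y + polar Q x y"
  unfolding polar_def by (cases "Q x"; cases "Q y"; cases "Q (x + y)"; simp)

lemma polar_commute: "polar Q x y = polar Q y x"
  unfolding polar_def add.commute[of x y] by (cases "Q x"; cases "Q y"; simp)

lemma polar_add_left: "quadratic_form Q \<Longrightarrow> polar Q (x + y) z = polar Q x z + polar Q y z"
  unfolding quadratic_form_def by blast

lemma polar_add_right: "quadratic_form Q \<Longrightarrow> polar Q z (x + y) = polar Q z x + polar Q z y"
  by (metis polar_add_left polar_commute)

lemma quadratic_form_zero:
  assumes "quadratic_form Q"
  shows "Q 0 = 0"
proof -
  have "Q (0 *s 0) = 0 ^ 2 * Q 0"
    using assms unfolding quadratic_form_def by blast
  then show ?thesis
    by simp
qed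

lemma singular_add_iff:
  assumes "Q x = 0" "Q y = 0"
  shows "Q (x + y) = 0 \<longleftrightarrow> polar Q x y = 0"
  using assms by (simp add: quadratic_add)

lemma contained_in_quadric_iff:
  "quadratic_form Q \<Longrightarrow> contained_in_quadric Q W \<longleftrightarrow> (\<forall>w\<in>W. Q w = 0)"
  unfolding contained_in_quadric_def quadric_def by (auto simp: quadratic_form_zero)

lemma polar_eq_0_if_contained_in_quadric:
  assumes "quadratic_form Q" "gf2_subspace W" "contained_in_quadric Q W" "x \<in> W" "y \<in> W"
  shows "polar Q x y = 0"
  using assms by (metis contained_in_quadric_iff gf2_subspaceD(2) singular_add_iff)

text \<open>A nonzero additive functional is balanced: adding a vector a with f a = 1 swaps its
  zeros and its ones.\<close>
lemma double_card_zeros_additive: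
  fixes f :: "'n::finite gf2vec \<Rightarrow> bit"
  assumes "gf2_subspace S" and additive: "\<And>x y. x \<in> S \<Longrightarrow> y \<in> S \<Longrightarrow> f (x + y) = f x + f y"
  shows "2 * card {y\<in>S. f y = 0} = (if \<forall>y\<in>S. f y = 0 then 2 * card S else card S)"
proof (cases "\<forall>y\<in>S. f y = 0")
  case True
  then have "{y\<in>S. f y = 0} = S"
    by auto
  with True show ?thesis
    by simp
next
  case False
  then obtain a where a: "a \<in> S" "f a = 1"
    by auto
  have "bij_betw (\<lambda>y. y + a) {y\<in>S. f y = 0} {y\<in>S. f y = 1}"
    by (rule bij_betw_byWitness[where f' = "\<lambda>y. y + a"])
      (use a additive gf2_subspaceD[OF \<open>gf2_subspace S\<close>] in auto)
  then have "card {y\<in>S. f y = 0} = card {y\<in>S. f y = 1}"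
    by (rule bij_betw_same_card)
  moreover have "card S = card {y\<in>S. f y = 0} + card {y\<in>S. f y = 1}"
    by (subst card_Un_disjoint[symmetric]) (auto intro: arg_cong[where f = card])
  ultimately show ?thesis
    using False by simp
qed

lemma double_sum_card_zeros:
  fixes B :: "'m::finite gf2vec \<Rightarrow> 'n::finite gf2vec \<Rightarrow> bit"
  assumes "gf2_subspace V"
    and "\<And>u v v'. u \<in> U \<Longrightarrow> v \<in> V \<Longrightarrow> v' \<in> V \<Longrightarrow> B u (v + v') = B u v + B u v'"
  shows "2 * (\<Sum>u\<in>U. card {v\<in>V. B u v = 0})
    = card U * card V + card {u\<in>U. \<forall>v\<in>V. B u v = 0} * card V"
proof -
  have "2 * (\<Sum>u\<in>U. card {v\<in>V. B u v = 0})
      = (\<Sum>u\<in>U. card V + (if \<forall>v\<in>V. B u v = 0 then card V else 0))"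
    unfolding sum_distrib_left
    by (intro sum.cong refl) (simp add: double_card_zeros_additive assms)
  also have "\<dots> = card U * card V + card {u\<in>U. \<forall>v\<in>V. B u v = 0} * card V"
    by (simp add: sum.distrib flip: sum.inter_filter)
  finally show ?thesis .
qed

text \<open>Both radicals have index 2 to the rank of the pairing; here this is seen by counting the
  pairs with B u v = 0 by rows and by columns.\<close>
lemma card_radicals_pairing:
  fixes B :: "'m::finite gf2vec \<Rightarrow> 'n::finite gf2vec \<Rightarrow> bit"
  assumes "gf2_subspace U" "gf2_subspace V"
    and "\<And>u u' v. u \<in> U \<Longrightarrow> u' \<in> U \<Longrightarrow> v \<in> V \<Longrightarrow> B (u + u') v = B u v + B u' v"
    and "\<And>u v v'. u \<in> U \<Longrightarrow> v \<in> V \<Longrightarrow> v' \<in> V \<Longrightarrow> B u (v + v') = B u v + B u v'"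
  shows "card {u\<in>U. \<forall>v\<in>V. B u v = 0} * card V = card {v\<in>V. \<forall>u\<in>U. B u v = 0} * card U"
proof -
  have card_as_sum: "card {x\<in>X. P x} = (\<Sum>x\<in>X. of_bool (P x))" for X :: "'a::finite set" and P
    by (simp add: Collect_conj_eq Int_commute)
  have "(\<Sum>u\<in>U. card {v\<in>V. B u v = 0}) = (\<Sum>v\<in>V. card {u\<in>U. B u v = 0})"
    unfolding card_as_sum by (rule sum.swap)
  with double_sum_card_zeros[of V U B] double_sum_card_zeros[of U V "\<lambda>v u. B u v"] assms
  show ?thesis
    by (simp add: mult.commute)
qed

lemma gf2_subspace_join:
  assumes "gf2_subspace W"
  shows "gf2_subspace (join W X)"
  unfolding gf2_subspace_def
proof (intro conjI ballI)
  show "0 \<in> join W X"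
    using gf2_subspaceD(1)[OF assms] by (simp add: join_def)
next
  fix x y assume "x \<in> join W X" "y \<in> join W X"
  then obtain u v where uv: "u \<in> W" "v \<in> W"
    and x: "x = u \<or> x = X + u" and y: "y = v \<or> y = X + v"
    unfolding join_def by blast
  have "X + u + (X + v) = u + v"
    by (simp add: add.assoc add.left_commute[of u X])
  with x y have "x + y = u + v \<or> x + y = X + (u + v)"
    by (auto simp: add.assoc add.left_commute[of u X])
  moreover have "u + v \<in> W"
    using uv by (rule gf2_subspaceD(2)[OF assms])
  ultimately show "x + y \<in> join W X"
    unfolding join_def by auto
qed

lemma card_join:
  assumes "gf2_subspace W" "X \<notin> W"
  shows "card (join W X) = 2 * card W"
proof -
  have "W \<inter> (+) X ` W = {}"
  proof (rule ccontr)
    assume "W \<inter> (+) X ` W \<noteq> {}"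
    then obtain w where "X + w \<in> W" "w \<in> W"
      by auto
    then have "X + w + w \<in> W"
      by (rule gf2_subspaceD(2)[OF assms(1)])
    with assms(2) show False
      by simp
  qed
  moreover have "card ((+) X ` W) = card W"
    by (rule card_image) (simp add: inj_on_def)
  ultimately show ?thesis
    unfolding join_def by (simp add: card_Un_disjoint)
qed

lemma contained_in_quadric_join:
  assumes "quadratic_form Q" "contained_in_quadric Q W" "Q X = 0" "\<forall>w\<in>W. polar Q X w = 0"
  shows "contained_in_quadric Q (join W X)"
proof -
  have W: "\<forall>w\<in>W. Q w = 0"
    using assms(1,2) by (simp add: contained_in_quadric_iff)
  then have "\<forall>w\<in>W. Q (X + w) = 0"
    using assms(3,4) by (simp add: singular_add_iff)
  with W show ?thesis
    unfolding join_def by (auto simp: contained_in_quadric_iff[OF assms(1)])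
qed

lemma le_proj_index:
  fixes Q :: "'n::finite gf2vec \<Rightarrow> bit"
  assumes "proj_subspace W k" "contained_in_quadric Q W"
  shows "k \<le> proj_index Q"
  unfolding proj_index_def
proof (rule Greatest_le_nat[where b = "CARD('n gf2vec)"])
  show "\<exists>W. proj_subspace W k \<and> contained_in_quadric Q W"
    using assms by blast
next
  fix t assume "\<exists>W::'n gf2vec set. proj_subspace W t \<and> contained_in_quadric Q W"
  then obtain W' :: "'n gf2vec set" where "card W' = 2 ^ (t + 1)"
    unfolding proj_subspace_def by blast
  moreover have "card W' \<le> CARD('n gf2vec)"
    by (rule card_mono) auto
  moreover have "t < 2 ^ (t + 1)"
    by (induction t) auto
  ultimately show "t \<le> CARD('n gf2vec)"
    by linarith
qed

lemma mem_generator_if_orthogonal: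
  assumes "quadratic_form Q" "generator Q G" "Q X = 0" "\<forall>w\<in>G. polar Q X w = 0"
  shows "X \<in> G"
proof (rule ccontr)
  assume "X \<notin> G"
  have G: "gf2_subspace G" "card G = 2 ^ (proj_index Q + 1)" "contained_in_quadric Q G"
    using assms(2) unfolding generator_def proj_subspace_def by auto
  with \<open>X \<notin> G\<close> have "proj_subspace (join G X) (proj_index Q + 1)"
    unfolding proj_subspace_def by (simp add: gf2_subspace_join card_join)
  moreover have "contained_in_quadric Q (join G X)"
    using assms G by (simp add: contained_in_quadric_join)
  ultimately show False
    using le_proj_index by fastforce
qed

lemma type_ii_if_orthogonal:
  assumes "quadratic_form Q" "contained_in_quadric Q A"
    and "X \<in> quadric Q" "X \<notin> A" "\<forall>a\<in>A. polar Q X a = 0"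
  shows "type_ii Q A X"
  using assms contained_in_quadric_join unfolding type_ii_def quadric_def by blast

lemma left_radical_eq_if_no_type_ii:
  assumes "quadratic_form Q" "gf2_subspace A" "contained_in_quadric Q A"
    and "contained_in_quadric Q G" "\<not> (\<exists>X\<in>G - {0}. type_ii Q A X)"
  shows "{x\<in>G. \<forall>a\<in>A. polar Q x a = 0} = G \<inter> A"
proof (intro equalityI subsetI)
  fix x assume x: "x \<in> {x\<in>G. \<forall>a\<in>A. polar Q x a = 0}"
  show "x \<in> G \<inter> A"
  proof (rule ccontr)
    assume "x \<notin> G \<inter> A"
    with x gf2_subspaceD(1)[OF assms(2)] have "x \<in> G - {0}" "x \<notin> A"
      by auto
    with assms(4) have "x \<in> quadric Q"
      by (auto simp: contained_in_quadric_def)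
    with x \<open>x \<notin> A\<close> have "type_ii Q A x"
      by (simp add: type_ii_if_orthogonal[OF assms(1,3)])
    with assms(5) \<open>x \<in> G - {0}\<close> show False
      by blast
  qed
qed (use polar_eq_0_if_contained_in_quadric[OF assms(1-3)] in auto)

lemma right_radical_eq_generator:
  assumes "quadratic_form Q" "generator Q G" "contained_in_quadric Q A"
  shows "{a\<in>A. \<forall>x\<in>G. polar Q x a = 0} = G \<inter> A"
proof (intro equalityI subsetI)
  fix a assume a: "a \<in> {a\<in>A. \<forall>x\<in>G. polar Q x a = 0}"
  then have "Q a = 0"
    using assms(1,3) by (simp add: contained_in_quadric_iff)
  moreover from a have "\<forall>x\<in>G. polar Q a x = 0"
    by (simp add: polar_commute[of Q a])
  ultimately have "a \<in> G"
    by (rule mem_generator_if_orthogonal[OF assms(1,2)])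
  with a show "a \<in> G \<inter> A"
    by simp
next
  have "gf2_subspace G" "contained_in_quadric Q G"
    using assms(2) by (simp_all add: generator_def proj_subspace_def)
  then show "a \<in> {a\<in>A. \<forall>x\<in>G. polar Q x a = 0}" if "a \<in> G \<inter> A" for a
    using that polar_eq_0_if_contained_in_quadric[OF assms(1)] by auto
qed

theorem lemma5p3:
  fixes Q :: "'n::finite gf2vec \<Rightarrow> bit" and A :: "'n gf2vec set" and s :: nat
  assumes "nonsingular_quadric Q"
    and "proj_index Q \<ge> 1"
    and "s < proj_index Q"
    and "proj_subspace A s"
    and "contained_in_quadric Q A"
  shows "\<forall>G. generator Q G \<longrightarrow> (\<exists>X\<in>G - {0}. type_ii Q A X)"
proof (intro allI impI, rule ccontr)
  fix G assume gen: "generator Q G" and no_type_ii: "\<not> (\<exists>X\<in>G - {0}. type_ii Q A X)"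
  have Q: "quadratic_form Q"
    using assms(1) unfolding nonsingular_quadric_def by blast
  have G: "gf2_subspace G" "card G = 2 ^ (proj_index Q + 1)" "contained_in_quadric Q G"
    and A: "gf2_subspace A" "card A = 2 ^ (s + 1)" "contained_in_quadric Q A"
    using gen assms(4,5) unfolding generator_def proj_subspace_def by auto
  have "card (G \<inter> A) * card A = card (G \<inter> A) * card G"
    using card_radicals_pairing[OF G(1) A(1), of "polar Q"]
      left_radical_eq_if_no_type_ii[OF Q A(1,3) G(3) no_type_ii]
      right_radical_eq_generator[OF Q gen A(3)]
    by (simp add: polar_add_left[OF Q] polar_add_right[OF Q])
  moreover have "G \<inter> A \<noteq> {}"
    using gf2_subspaceD(1)[OF A(1)] gf2_subspaceD(1)[OF G(1)] by blast
  ultimately have "s = proj_index Q"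
    using A(2) G(2) by simp
  with assms(3) show False
    by simp
qed

end
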